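(* Let $N\ge 1$ and let $A_N^*:=\bigcup_{j=1}^N\bigcup_{B\in L_j(\Gamma)}B$ be the union of all lower sets in $\Gamma=\mathbb N_0^s$ of cardinality at most $N$. Then $A_N^*$ is a monomial degree reducing universal interpolation set of order $N$, and it is minimal: every monomial degree reducing universal interpolation set of order $N$ contains $A_N^*$; in particular no proper subset of $A_N^*$ is a monomial degree reducing universal interpolation set of order $N$.
   Context: $\Pi=\mathbb C[x_1,\dots,x_s]$, $\deg$ is total degree with $\deg 0<0$. For $A\subset\Gamma$, $\Pi_A$ is the span of the monomials $x^\alpha$, $\alpha\in A$. A subspace $\mathcal P\subseteq\Pi$ is a degree reducing universal interpolation space of order $N$ if for every finite $X\subset\mathbb C^s$ with $\#X\le N$ and every $q\in\Pi$ there is $p\in\mathcal P$ with $p|_X=q|_X$ and $\deg p\le\deg q$. A set $A\subset\Gamma$ is a monomial degree reducing universal interpolation set of order $N$ if $\Pi_A$ is a degree reducing universal interpolation space of order $N$. For $\alpha,\beta\in\Gamma$, $\alpha\le\beta$ means $\alpha_j\le\beta_j$ for all $j$; $B\subset\Gamma$ is a lower set if $\alpha\in B$ and $\beta\le\alpha$ imply $\beta\in B$; $L_j(\Gamma)$ denotes the set of lower sets of cardinality $j$. *)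

theory Defs
  imports Complex_Main
begin

text \<open>Variables are indexed by a finite type 'n (so s = CARD('n)); multi-indices in
  Gamma = N_0^s are functions 'n => nat; the order on functions is pointwise, i.e.
  the componentwise order of the paper. A polynomial in C[x_1..x_s] is its finitely
  supported coefficient function.\<close>

type_synonym 'n mpoly = "('n \<Rightarrow> nat) \<Rightarrow> complex"

definition supp :: "'n mpoly \<Rightarrow> ('n \<Rightarrow> nat) set" where
  "supp p = {\<alpha>. p \<alpha> \<noteq> 0}"

definition polys :: "'n mpoly set" where
  "polys = {p. finite (supp p)}"

definition mdeg :: "('n::finite \<Rightarrow> nat) \<Rightarrow> nat" where
  "mdeg \<alpha> = (\<Sum>j\<in>UNIV. \<alpha> j)"

definition tdeg :: "'n::finite mpoly \<Rightarrow> int" where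
  "tdeg p = (if supp p = {} then -1 else Max ((\<lambda>\<alpha>. int (mdeg \<alpha>)) ` supp p))"

definition peval :: "'n::finite mpoly \<Rightarrow> ('n \<Rightarrow> complex) \<Rightarrow> complex" where
  "peval p x = (\<Sum>\<alpha>\<in>supp p. p \<alpha> * (\<Prod>j\<in>UNIV. x j ^ \<alpha> j))"

definition Pi_span :: "('n \<Rightarrow> nat) set \<Rightarrow> 'n mpoly set" where
  "Pi_span A = {p \<in> polys. supp p \<subseteq> A}"

definition dr_uis :: "'n::finite mpoly set \<Rightarrow> nat \<Rightarrow> bool" where
  "dr_uis P N \<longleftrightarrow> P \<subseteq> polys \<and>
     (\<forall>X :: ('n \<Rightarrow> complex) set. finite X \<and> card X \<le> N \<longrightarrow>
       (\<forall>q\<in>polys. \<exists>p\<in>P. (\<forall>x\<in>X. peval p x = peval q x) \<and> tdeg p \<le> tdeg q))"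

definition mdr_uis_set :: "('n::finite \<Rightarrow> nat) set \<Rightarrow> nat \<Rightarrow> bool" where
  "mdr_uis_set A N \<longleftrightarrow> dr_uis (Pi_span A) N"

definition lower_set :: "('n \<Rightarrow> nat) set \<Rightarrow> bool" where
  "lower_set B \<longleftrightarrow> (\<forall>\<alpha>\<in>B. \<forall>\<beta>. \<beta> \<le> \<alpha> \<longrightarrow> \<beta> \<in> B)"

definition lower_sets_card :: "nat \<Rightarrow> ('n \<Rightarrow> nat) set set" where
  "lower_sets_card j = {B. lower_set B \<and> finite B \<and> card B = j}"

definition Astar :: "nat \<Rightarrow> ('n \<Rightarrow> nat) set" where
  "Astar N = (\<Union>j\<in>{1..N}. \<Union>(lower_sets_card j))"

end

theory Submission
  imports Defs "HOL-Library.Function_Algebras" "HOL-Library.Fun_Lexorder" "HOL-Library.Countable"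
    "HOL-Analysis.Complex_Transcendental"
begin

text \<open>
  If \<alpha> lies in a lower set with at most N elements, so does the whole box
  \<open>{..\<alpha>}\<close>. Let \<open>\<omega>\<^sub>j\<close> be a primitive \<open>(\<alpha>\<^sub>j+1)\<close>-th root of unity and interpolate \<open>x\<^sup>\<alpha>\<close> on the
  grid \<open>{\<omega>\<^sup>\<beta> | \<beta> \<le> \<alpha>}\<close>. The discrete Fourier functional \<open>r \<mapsto> \<Sum>\<^sub>\<beta> \<omega>\<^sup>\<beta> r(\<omega>\<^sup>\<beta>)\<close> factors
  over the variables on monomials; it kills every \<open>x\<^sup>\<gamma>\<close> with \<open>|\<gamma>| \<le> |\<alpha>|\<close>, \<open>\<gamma> \<noteq> \<alpha>\<close> (some
  \<open>\<gamma>\<^sub>j < \<alpha>\<^sub>j\<close> makes one factor a full sum of roots of unity), but not \<open>x\<^sup>\<alpha>\<close>. Hence every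
  degree reducing interpolant of \<open>x\<^sup>\<alpha>\<close> on the grid has a nonzero coefficient at \<alpha>.

  Given a finite X, run Gaussian elimination on the restrictions of the monomials
  to X in graded lexicographic order, keeping the exponents whose restriction is not a
  combination of the restrictions of smaller ones. The order is compatible with multiplication
  by monomials, so the kept exponents form a lower set; their restrictions are independent,
  so there are at most \<open>#X\<close> of them and they lie in \<open>Astar N\<close>. Every monomial agrees on X
  with a combination of kept monomials that are not larger, in particular not of larger degree.
\<close>

definition monom :: "('n::finite \<Rightarrow> nat) \<Rightarrow> ('n \<Rightarrow> complex) \<Rightarrow> complex" where
  "monom \<alpha> x = (\<Prod>j\<in>UNIV. x j ^ \<alpha> j)"

lemma peval_eq_sum_monom:
  assumes "finite S" "supp p \<subseteq> S"
  shows "peval p x = (\<Sum>\<alpha>\<in>S. p \<alpha> * monom \<alpha> x)"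
  unfolding peval_def monom_def
  by (rule sum.mono_neutral_left) (use assms in \<open>auto simp: supp_def\<close>)

lemma tdeg_ge_mdeg:
  assumes "finite (supp q)" "\<gamma> \<in> supp q"
  shows "int (mdeg \<gamma>) \<le> tdeg q"
proof -
  have "supp q \<noteq> {}" using assms(2) by blast
  then have "tdeg q = Max ((\<lambda>\<alpha>. int (mdeg \<alpha>)) ` supp q)" by (simp add: tdeg_def)
  then show ?thesis using assms by (simp add: Max_ge)
qed

lemma tdeg_le_iff:
  assumes "finite (supp p)"
  shows "tdeg p \<le> int d \<longleftrightarrow> (\<forall>\<alpha>\<in>supp p. mdeg \<alpha> \<le> d)"
proof (cases "supp p = {}")
  case False
  then show ?thesis using assms by (simp add: tdeg_def Max_le_iff)
qed (simp add: tdeg_def)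

lemma tdeg_le_tdeg:
  assumes "finite (supp p)" "finite (supp q)" "\<forall>\<beta>\<in>supp p. \<exists>\<gamma>\<in>supp q. mdeg \<beta> \<le> mdeg \<gamma>"
  shows "tdeg p \<le> tdeg q"
proof (cases "supp p = {}")
  case True
  have "-1 \<le> tdeg q"
  proof (cases "supp q = {}")
    case False
    then obtain \<gamma> where "\<gamma> \<in> supp q" by blast
    then show ?thesis using tdeg_ge_mdeg[OF assms(2)] by force
  qed (simp add: tdeg_def)
  then show ?thesis using True by (simp add: tdeg_def)
next
  case False
  have "int (mdeg \<beta>) \<le> tdeg q" if "\<beta> \<in> supp p" for \<beta>
    using assms(3) that tdeg_ge_mdeg[OF assms(2)] by fastforce
  then show ?thesis using False assms(1) by (simp add: tdeg_def[of p] Max_le_iff)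
qed

section \<open>Minimality\<close>

lemma sum_root_unity_powers:
  assumes "n > 0"
  shows "(\<Sum>b<n. exp (2 * of_real pi * \<i> / of_nat n) ^ (b * k)) = (if n dvd k then of_nat n else 0)"
proof -
  define z where "z = exp (2 * of_real pi * \<i> * of_nat k / of_nat n)"
  have "exp (2 * of_real pi * \<i> / of_nat n) ^ k = z"
    unfolding z_def exp_of_nat_mult[symmetric] by (simp add: field_simps)
  then have sum_eq: "(\<Sum>b<n. exp (2 * of_real pi * \<i> / of_nat n) ^ (b * k)) = (\<Sum>b<n. z ^ b)"
    by (simp add: power_mult mult.commute[of _ k])
  have z_one: "z = 1 \<longleftrightarrow> n dvd k"
    unfolding z_def using complex_root_unity_eq_1 assms by simp
  show ?thesis
  proof (cases "n dvd k")
    case True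
    then show ?thesis using sum_eq z_one by simp
  next
    case False
    have "z ^ n = 1"
      unfolding z_def using complex_root_unity assms by simp
    then have "(\<Sum>b<n. z ^ b) = 0"
      using False z_one by (simp add: sum_gp_strict)
    then show ?thesis using sum_eq False by simp
  qed
qed

lemma mdeg_le_imp_less_component:
  fixes \<alpha> \<gamma> :: "'n::finite \<Rightarrow> nat"
  assumes "mdeg \<gamma> \<le> mdeg \<alpha>" "\<gamma> \<noteq> \<alpha>"
  obtains j where "\<gamma> j < \<alpha> j"
proof -
  have "\<exists>j. \<gamma> j < \<alpha> j"
  proof (rule ccontr)
    assume "\<nexists>j. \<gamma> j < \<alpha> j"
    then have "\<alpha> \<le> \<gamma>" by (simp add: le_fun_def not_less)
    with assms(2) obtain k where "\<alpha> k < \<gamma> k" by (metis antisym le_fun_def le_neq_implies_less)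
    then have "mdeg \<alpha> < mdeg \<gamma>"
      unfolding mdeg_def using \<open>\<alpha> \<le> \<gamma>\<close> by (intro sum_strict_mono_ex1) (auto simp: le_fun_def)
    with assms(1) show False by simp
  qed
  then show ?thesis using that by blast
qed

lemma atMost_fun_eq_PiE: "{..\<alpha>} = PiE UNIV (\<lambda>j. {..\<alpha> j})"
  by (auto simp: le_fun_def PiE_iff)

definition box_roots :: "('n \<Rightarrow> nat) \<Rightarrow> 'n \<Rightarrow> complex" where
  "box_roots \<alpha> j = exp (2 * of_real pi * \<i> / of_nat (Suc (\<alpha> j)))"

lemma box_sum_monom:
  fixes \<alpha> \<gamma> :: "'n::finite \<Rightarrow> nat"
  assumes "mdeg \<gamma> \<le> mdeg \<alpha>"
  defines "\<omega> \<equiv> box_roots \<alpha>"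
  shows "(\<Sum>\<beta>\<in>{..\<alpha>}. monom \<beta> \<omega> * monom \<gamma> (\<lambda>j. \<omega> j ^ \<beta> j))
       = (if \<gamma> = \<alpha> then (\<Prod>j\<in>UNIV. of_nat (Suc (\<alpha> j))) else 0)"
proof -
  have factor: "(\<Sum>b\<in>{..\<alpha> j}. \<omega> j ^ (b * (\<gamma> j + 1)))
      = (if Suc (\<alpha> j) dvd \<gamma> j + 1 then of_nat (Suc (\<alpha> j)) else 0)" for j
    unfolding \<omega>_def box_roots_def lessThan_Suc_atMost[symmetric]
    by (rule sum_root_unity_powers) simp
  have "monom \<beta> \<omega> * monom \<gamma> (\<lambda>j. \<omega> j ^ \<beta> j) = (\<Prod>j\<in>UNIV. \<omega> j ^ (\<beta> j * (\<gamma> j + 1)))" for \<beta>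
    by (simp add: monom_def prod.distrib[symmetric] power_mult[symmetric] power_add[symmetric]
        algebra_simps)
  then have "(\<Sum>\<beta>\<in>{..\<alpha>}. monom \<beta> \<omega> * monom \<gamma> (\<lambda>j. \<omega> j ^ \<beta> j))
      = (\<Prod>j\<in>UNIV. \<Sum>b\<in>{..\<alpha> j}. \<omega> j ^ (b * (\<gamma> j + 1)))"
    by (simp add: atMost_fun_eq_PiE prod_sum_PiE)
  also have "\<dots> = (if \<gamma> = \<alpha> then (\<Prod>j\<in>UNIV. of_nat (Suc (\<alpha> j))) else 0)"
  proof (cases "\<gamma> = \<alpha>")
    case True
    show ?thesis using factor unfolding True by simp
  next
    case False
    then obtain k where "\<gamma> k < \<alpha> k" using mdeg_le_imp_less_component assms(1) by blast
    then have "\<not> Suc (\<alpha> k) dvd \<gamma> k + 1" by (auto dest: dvd_imp_le)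
    then have "(\<Sum>b\<in>{..\<alpha> k}. \<omega> k ^ (b * (\<gamma> k + 1))) = 0" using factor[of k] by simp
    then show ?thesis using False by (auto intro: prod_zero)
  qed
  finally show ?thesis .
qed

lemma box_sum_peval:
  fixes \<alpha> :: "'n::finite \<Rightarrow> nat"
  assumes "finite (supp r)" "\<forall>\<gamma>\<in>supp r. mdeg \<gamma> \<le> mdeg \<alpha>"
  defines "\<omega> \<equiv> box_roots \<alpha>"
  shows "(\<Sum>\<beta>\<in>{..\<alpha>}. monom \<beta> \<omega> * peval r (\<lambda>j. \<omega> j ^ \<beta> j))
       = r \<alpha> * (\<Prod>j\<in>UNIV. of_nat (Suc (\<alpha> j)))"
proof -
  have "(\<Sum>\<beta>\<in>{..\<alpha>}. monom \<beta> \<omega> * peval r (\<lambda>j. \<omega> j ^ \<beta> j))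
      = (\<Sum>\<gamma>\<in>supp r. r \<gamma> * (\<Sum>\<beta>\<in>{..\<alpha>}. monom \<beta> \<omega> * monom \<gamma> (\<lambda>j. \<omega> j ^ \<beta> j)))"
    unfolding peval_def monom_def[of _ "\<lambda>j. \<omega> j ^ _ j", symmetric] sum_distrib_left
    by (subst sum.swap) (simp add: algebra_simps)
  also have "\<dots> = (\<Sum>\<gamma>\<in>supp r. if \<gamma> = \<alpha> then r \<alpha> * (\<Prod>j\<in>UNIV. of_nat (Suc (\<alpha> j))) else 0)"
    using assms(2) by (intro sum.cong refl) (simp add: \<omega>_def box_sum_monom)
  also have "\<dots> = r \<alpha> * (\<Prod>j\<in>UNIV. of_nat (Suc (\<alpha> j)))"
    using assms(1) by (simp add: supp_def)
  finally show ?thesis .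
qed

lemma Astar_subset_mdr_uis_set:
  fixes A :: "('n::finite \<Rightarrow> nat) set"
  assumes "mdr_uis_set A N"
  shows "Astar N \<subseteq> A"
proof
  fix \<alpha> :: "'n \<Rightarrow> nat"
  assume "\<alpha> \<in> Astar N"
  then obtain B where B: "lower_set B" "finite B" "card B \<le> N" and "\<alpha> \<in> B"
    unfolding Astar_def lower_sets_card_def by auto
  then have "{..\<alpha>} \<subseteq> B" unfolding lower_set_def by blast
  then have card_box: "card {..\<alpha>} \<le> N" using B card_mono le_trans by blast
  have fin_box: "finite {..\<alpha>}" by (simp add: atMost_fun_eq_PiE finite_PiE)
  define \<omega> where "\<omega> = box_roots \<alpha>"
  define X where "X = (\<lambda>\<beta> j. \<omega> j ^ \<beta> j) ` {..\<alpha>}"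
  have X: "finite X" "card X \<le> N"
    unfolding X_def using fin_box card_box card_image_le[OF fin_box] by (auto intro: le_trans)
  define q :: "'n mpoly" where "q = (\<lambda>\<gamma>. if \<gamma> = \<alpha> then 1 else 0)"
  have supp_q: "supp q = {\<alpha>}" unfolding supp_def q_def by auto
  have "q \<in> polys" using supp_q by (simp add: polys_def)
  with assms X obtain p where p: "p \<in> Pi_span A" and agree: "\<forall>x\<in>X. peval p x = peval q x"
    and "tdeg p \<le> tdeg q"
    unfolding mdr_uis_set_def dr_uis_def by blast
  have fin_p: "finite (supp p)" using p unfolding Pi_span_def polys_def by auto
  have "tdeg q = int (mdeg \<alpha>)" unfolding tdeg_def supp_q by simp
  with \<open>tdeg p \<le> tdeg q\<close> have deg_p: "\<forall>\<gamma>\<in>supp p. mdeg \<gamma> \<le> mdeg \<alpha>"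
    using tdeg_le_iff[OF fin_p] by simp
  have "(\<Sum>\<beta>\<in>{..\<alpha>}. monom \<beta> \<omega> * peval p (\<lambda>j. \<omega> j ^ \<beta> j))
      = (\<Sum>\<beta>\<in>{..\<alpha>}. monom \<beta> \<omega> * peval q (\<lambda>j. \<omega> j ^ \<beta> j))"
    using agree unfolding X_def by (intro sum.cong refl) auto
  then have "p \<alpha> * (\<Prod>j\<in>UNIV. of_nat (Suc (\<alpha> j))) = q \<alpha> * (\<Prod>j\<in>UNIV. of_nat (Suc (\<alpha> j)))"
    unfolding \<omega>_def using box_sum_peval[OF fin_p deg_p] box_sum_peval[of q \<alpha>] supp_q by simp
  then have "p \<alpha> = 1" by (simp add: q_def del: of_nat_Suc)
  then show "\<alpha> \<in> A" using p unfolding Pi_span_def supp_def by auto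
qed

section \<open>A graded lexicographic order on exponents\<close>

text \<open>\<open>to_nat\<close> enumerates the variables, and \<open>lex_key \<alpha>\<close> lists the entries of \<alpha> in this
  order (padded with 0), so that \<open>less_fun\<close> compares exponents lexicographically.\<close>
definition lex_key :: "('n::finite \<Rightarrow> nat) \<Rightarrow> nat \<Rightarrow> nat" where
  "lex_key \<alpha> k = (if k \<in> range (to_nat :: 'n \<Rightarrow> nat) then \<alpha> (from_nat k) else 0)"

definition grlex_less :: "('n::finite \<Rightarrow> nat) \<Rightarrow> ('n \<Rightarrow> nat) \<Rightarrow> bool" where
  "grlex_less \<alpha> \<beta> \<longleftrightarrow> mdeg \<alpha> < mdeg \<beta> \<or> (mdeg \<alpha> = mdeg \<beta> \<and> less_fun (lex_key \<alpha>) (lex_key \<beta>))"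

lemma lex_key_to_nat [simp]: "lex_key \<alpha> (to_nat j) = \<alpha> j"
  by (simp add: lex_key_def)

lemma lex_key_add: "lex_key (\<alpha> + \<delta>) = lex_key \<alpha> + lex_key \<delta>"
  by (auto simp: lex_key_def fun_eq_iff)

lemma grlex_less_irrefl: "\<not> grlex_less \<alpha> \<alpha>"
  by (simp add: grlex_less_def less_fun_irrefl)

lemma grlex_less_trans: "grlex_less \<alpha> \<beta> \<Longrightarrow> grlex_less \<beta> \<gamma> \<Longrightarrow> grlex_less \<alpha> \<gamma>"
  unfolding grlex_less_def using less_fun_trans by fastforce

lemma grlex_less_linear:
  fixes \<alpha> \<beta> :: "'n::finite \<Rightarrow> nat"
  assumes "\<alpha> \<noteq> \<beta>"
  shows "grlex_less \<alpha> \<beta> \<or> grlex_less \<beta> \<alpha>"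
proof -
  have "lex_key \<alpha> \<noteq> lex_key \<beta>"
    using assms by (metis ext lex_key_to_nat)
  moreover have "finite {k. lex_key \<alpha> k \<noteq> lex_key \<beta> k}"
    by (rule finite_subset[of _ "range to_nat"]) (auto simp: lex_key_def)
  ultimately have "less_fun (lex_key \<alpha>) (lex_key \<beta>) \<or> less_fun (lex_key \<beta>) (lex_key \<alpha>)"
    using less_fun_trichotomy by blast
  then show ?thesis unfolding grlex_less_def by linarith
qed

lemma mdeg_add: "mdeg (\<alpha> + \<delta>) = mdeg \<alpha> + mdeg \<delta>"
  by (simp add: mdeg_def sum.distrib)

lemma grlex_less_add_right: "grlex_less \<alpha> \<beta> \<Longrightarrow> grlex_less (\<alpha> + \<delta>) (\<beta> + \<delta>)"
  unfolding grlex_less_def less_fun_def mdeg_add lex_key_add by auto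

lemma grlex_less_imp_mdeg_le: "grlex_less \<alpha> \<beta> \<Longrightarrow> mdeg \<alpha> \<le> mdeg \<beta>"
  unfolding grlex_less_def by auto

lemma finite_mdeg_le: "finite {\<alpha> :: 'n::finite \<Rightarrow> nat. mdeg \<alpha> \<le> d}"
proof (rule finite_subset)
  show "{\<alpha> :: 'n \<Rightarrow> nat. mdeg \<alpha> \<le> d} \<subseteq> {..(\<lambda>_. d)}"
  proof
    fix \<alpha> :: "'n \<Rightarrow> nat"
    assume "\<alpha> \<in> {\<alpha>. mdeg \<alpha> \<le> d}"
    moreover have "\<alpha> j \<le> mdeg \<alpha>" for j
      unfolding mdeg_def by (rule member_le_sum) auto
    ultimately have "\<alpha> j \<le> d" for j
      using le_trans by blast
    then show "\<alpha> \<in> {..(\<lambda>_. d)}"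
      by (simp add: le_fun_def)
  qed
  show "finite {..(\<lambda>_. d) :: 'n \<Rightarrow> nat}" by (simp add: atMost_fun_eq_PiE finite_PiE)
qed

lemma wf_grlex_less: "wf {(\<alpha> :: 'n::finite \<Rightarrow> nat, \<beta>). grlex_less \<alpha> \<beta>}"
proof (rule wf_finite_segments)
  show "irrefl {(\<alpha> :: 'n \<Rightarrow> nat, \<beta>). grlex_less \<alpha> \<beta>}"
    by (simp add: irrefl_def grlex_less_irrefl)
  show "trans {(\<alpha> :: 'n \<Rightarrow> nat, \<beta>). grlex_less \<alpha> \<beta>}"
    unfolding trans_def using grlex_less_trans by blast
  show "finite {\<beta>. (\<beta>, \<alpha>) \<in> {(\<alpha>, \<beta>). grlex_less \<alpha> \<beta>}}" for \<alpha> :: "'n \<Rightarrow> nat"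
    by (rule finite_subset[OF _ finite_mdeg_le[of "mdeg \<alpha>"]]) (auto dest: grlex_less_imp_mdeg_le)
qed

lemma finite_has_grlex_greatest:
  fixes F :: "('n::finite \<Rightarrow> nat) set"
  assumes "finite F" "F \<noteq> {}"
  shows "\<exists>\<mu>\<in>F. \<forall>\<beta>\<in>F. \<beta> \<noteq> \<mu> \<longrightarrow> grlex_less \<beta> \<mu>"
  using assms
proof (induction F rule: finite_ne_induct)
  case (insert \<alpha> F)
  then obtain \<mu> where \<mu>: "\<mu> \<in> F" "\<forall>\<beta>\<in>F. \<beta> \<noteq> \<mu> \<longrightarrow> grlex_less \<beta> \<mu>"
    by blast
  show ?case
  proof (cases "grlex_less \<alpha> \<mu>")
    case True
    then show ?thesis using \<mu> by auto
  next
    case False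
    have "\<alpha> \<noteq> \<mu>" using \<mu>(1) insert.hyps(3) by blast
    with False have "grlex_less \<mu> \<alpha>" using grlex_less_linear by blast
    then have "\<forall>\<beta>\<in>insert \<alpha> F. \<beta> \<noteq> \<alpha> \<longrightarrow> grlex_less \<beta> \<alpha>"
      using \<mu> grlex_less_trans by (metis insertE)
    then show ?thesis by blast
  qed
qed simp

section \<open>Gaussian elimination of monomials on a finite point set\<close>

definition scale_fun :: "complex \<Rightarrow> ('a \<Rightarrow> complex) \<Rightarrow> 'a \<Rightarrow> complex" where
  "scale_fun c f = (\<lambda>x. c * f x)"

interpretation fun_space: vector_space scale_fun
  by unfold_locales (auto simp: scale_fun_def fun_eq_iff algebra_simps)

lemma sum_fun_apply: "(\<Sum>i\<in>I. f i) x = (\<Sum>i\<in>I. f i x :: complex)"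
  by (induction I rule: infinite_finite_induct) auto

lemma span_pointwise_mult:
  assumes "f \<in> fun_space.span S"
  shows "(\<lambda>x. m x * f x) \<in> fun_space.span ((\<lambda>g x. m x * g x) ` S)"
proof -
  have "module_hom scale_fun scale_fun (\<lambda>g x. m x * g x :: complex)"
    by (auto simp: module_hom_iff fun_space.module_axioms scale_fun_def fun_eq_iff algebra_simps)
  then show ?thesis using assms by (simp add: module_hom.span_image)
qed

definition monom_on :: "('n \<Rightarrow> complex) set \<Rightarrow> ('n::finite \<Rightarrow> nat) \<Rightarrow> ('n \<Rightarrow> complex) \<Rightarrow> complex" where
  "monom_on X \<alpha> = (\<lambda>x. if x \<in> X then monom \<alpha> x else 0)"

definition basis_exponents :: "('n \<Rightarrow> complex) set \<Rightarrow> ('n::finite \<Rightarrow> nat) set" where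
  "basis_exponents X = {\<alpha>. monom_on X \<alpha> \<notin> fun_space.span (monom_on X ` {\<beta>. grlex_less \<beta> \<alpha>})}"

lemma monom_mult_monom_on: "(\<lambda>x. monom \<delta> x * monom_on X \<alpha> x) = monom_on X (\<alpha> + \<delta>)"
  by (auto simp: fun_eq_iff monom_on_def monom_def power_add prod.distrib mult.commute)

lemma lower_set_basis_exponents:
  fixes X :: "('n::finite \<Rightarrow> complex) set"
  shows "lower_set (basis_exponents X)"
  unfolding lower_set_def
proof (intro ballI allI impI)
  fix \<alpha> \<beta> :: "'n \<Rightarrow> nat"
  assume \<alpha>: "\<alpha> \<in> basis_exponents X" and "\<beta> \<le> \<alpha>"
  then obtain \<delta> where \<alpha>_eq: "\<alpha> = \<beta> + \<delta>"
    by (metis le_iff_add)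
  show "\<beta> \<in> basis_exponents X"
  proof (rule ccontr)
    assume "\<beta> \<notin> basis_exponents X"
    then have "monom_on X \<beta> \<in> fun_space.span (monom_on X ` {\<gamma>. grlex_less \<gamma> \<beta>})"
      unfolding basis_exponents_def by simp
    then have "(\<lambda>x. monom \<delta> x * monom_on X \<beta> x)
        \<in> fun_space.span ((\<lambda>g x. monom \<delta> x * g x) ` monom_on X ` {\<gamma>. grlex_less \<gamma> \<beta>})"
      by (rule span_pointwise_mult)
    then have "monom_on X \<alpha> \<in> fun_space.span (monom_on X ` (\<lambda>\<gamma>. \<gamma> + \<delta>) ` {\<gamma>. grlex_less \<gamma> \<beta>})"
      by (simp add: image_image monom_mult_monom_on \<alpha>_eq)
    also have "\<dots> \<subseteq> fun_space.span (monom_on X ` {\<gamma>. grlex_less \<gamma> \<alpha>})"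
      unfolding \<alpha>_eq by (intro fun_space.span_mono image_mono) (auto intro: grlex_less_add_right)
    finally show False using \<alpha> unfolding basis_exponents_def by simp
  qed
qed

lemma monom_on_in_span_basis_exponents:
  "monom_on X \<alpha> \<in> fun_space.span (monom_on X ` {\<beta> \<in> basis_exponents X. \<beta> = \<alpha> \<or> grlex_less \<beta> \<alpha>})"
  using wf_grlex_less
proof (induction \<alpha> rule: wf_induct_rule)
  case (less \<alpha>)
  let ?V = "fun_space.span (monom_on X ` {\<beta> \<in> basis_exponents X. \<beta> = \<alpha> \<or> grlex_less \<beta> \<alpha>})"
  show ?case
  proof (cases "\<alpha> \<in> basis_exponents X")
    case True
    then show ?thesis by (intro fun_space.span_base) auto
  next
    case False
    have "monom_on X ` {\<gamma>. grlex_less \<gamma> \<alpha>} \<subseteq> ?V"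
    proof (rule image_subsetI)
      fix \<gamma> assume "\<gamma> \<in> {\<gamma>. grlex_less \<gamma> \<alpha>}"
      then have \<gamma>: "grlex_less \<gamma> \<alpha>" by simp
      then have "monom_on X \<gamma>
          \<in> fun_space.span (monom_on X ` {\<beta> \<in> basis_exponents X. \<beta> = \<gamma> \<or> grlex_less \<beta> \<gamma>})"
        using less by simp
      also have "\<dots> \<subseteq> ?V"
        using \<gamma> grlex_less_trans by (intro fun_space.span_mono image_mono) blast
      finally show "monom_on X \<gamma> \<in> ?V" .
    qed
    then have "fun_space.span (monom_on X ` {\<gamma>. grlex_less \<gamma> \<alpha>}) \<subseteq> ?V"
      by (simp add: fun_space.span_minimal)
    with False show ?thesis unfolding basis_exponents_def by blast
  qed
qed

lemma independent_monom_on_basis_exponents: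
  assumes "finite F" "F \<subseteq> basis_exponents X"
  shows "fun_space.independent (monom_on X ` F)"
  using assms
proof (induction F rule: finite_remove_induct)
  case empty
  then show ?case by (simp add: fun_space.independent_empty)
next
  case (remove F)
  obtain \<mu> where \<mu>: "\<mu> \<in> F" "\<forall>\<beta>\<in>F. \<beta> \<noteq> \<mu> \<longrightarrow> grlex_less \<beta> \<mu>"
    using finite_has_grlex_greatest remove.hyps(1,2) by blast
  have "fun_space.span (monom_on X ` (F - {\<mu>})) \<subseteq> fun_space.span (monom_on X ` {\<beta>. grlex_less \<beta> \<mu>})"
    using \<mu>(2) by (intro fun_space.span_mono image_mono) auto
  moreover have "monom_on X \<mu> \<notin> fun_space.span (monom_on X ` {\<beta>. grlex_less \<beta> \<mu>})"
    using \<mu>(1) remove.prems unfolding basis_exponents_def by auto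
  ultimately have "monom_on X \<mu> \<notin> fun_space.span (monom_on X ` (F - {\<mu>}))"
    by blast
  moreover have "fun_space.independent (monom_on X ` (F - {\<mu>}))"
    using remove.IH[OF \<mu>(1)] remove.prems by blast
  moreover have "monom_on X ` F = insert (monom_on X \<mu>) (monom_on X ` (F - {\<mu>}))"
    using \<mu>(1) by blast
  ultimately show ?case by (simp add: fun_space.independent_insertI)
qed

lemma inj_on_monom_on_basis_exponents: "inj_on (monom_on X) (basis_exponents X)"
proof (rule inj_onI, rule ccontr)
  fix \<alpha> \<beta> assume \<alpha>: "\<alpha> \<in> basis_exponents X" and \<beta>: "\<beta> \<in> basis_exponents X"
    and eq: "monom_on X \<alpha> = monom_on X \<beta>" and "\<alpha> \<noteq> \<beta>"
  have "monom_on X \<alpha> \<notin> fun_space.span (monom_on X ` {\<gamma>. grlex_less \<gamma> \<beta>})"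
    using \<beta> eq unfolding basis_exponents_def by simp
  moreover have "monom_on X \<beta> \<notin> fun_space.span (monom_on X ` {\<gamma>. grlex_less \<gamma> \<alpha>})"
    using \<alpha> eq unfolding basis_exponents_def by simp
  ultimately show False
    using grlex_less_linear[OF \<open>\<alpha> \<noteq> \<beta>\<close>] by (auto intro: fun_space.span_base)
qed

lemma card_le_if_subset_basis_exponents:
  fixes X :: "('n::finite \<Rightarrow> complex) set"
  assumes "finite X" "finite F" "F \<subseteq> basis_exponents X"
  shows "card F \<le> card X"
proof -
  define \<delta> where "\<delta> x = (\<lambda>y. if y = x then 1 else 0 :: complex)" for x :: "'n \<Rightarrow> complex"
  have "monom_on X \<alpha> = (\<Sum>x\<in>X. scale_fun (monom \<alpha> x) (\<delta> x))" for \<alpha>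
  proof
    fix y
    have "(\<Sum>x\<in>X. scale_fun (monom \<alpha> x) (\<delta> x)) y = (\<Sum>x\<in>X. if x = y then monom \<alpha> x else 0)"
      unfolding sum_fun_apply scale_fun_def \<delta>_def by (intro sum.cong) auto
    then show "monom_on X \<alpha> y = (\<Sum>x\<in>X. scale_fun (monom \<alpha> x) (\<delta> x)) y"
      using assms(1) by (simp add: monom_on_def sum.delta')
  qed
  then have "monom_on X ` F \<subseteq> fun_space.span (\<delta> ` X)"
    by (simp add: image_subset_iff fun_space.span_sum fun_space.span_scale fun_space.span_base)
  then have "card (monom_on X ` F) \<le> card (\<delta> ` X)"
    using fun_space.independent_span_bound independent_monom_on_basis_exponents assms by blast
  also have "\<dots> \<le> card X"
    using assms(1) by (rule card_image_le)
  finally show ?thesis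
    using card_image[OF inj_on_subset[OF inj_on_monom_on_basis_exponents assms(3)]] by simp
qed

lemma finite_basis_exponents:
  assumes "finite X"
  shows "finite (basis_exponents X)"
proof (rule ccontr)
  assume "infinite (basis_exponents X)"
  then obtain F where "finite F" "card F = Suc (card X)" "F \<subseteq> basis_exponents X"
    using infinite_arbitrarily_large by blast
  with card_le_if_subset_basis_exponents[OF assms] show False by fastforce
qed

lemma basis_exponents_subset_Astar:
  assumes "finite X" "card X \<le> N"
  shows "basis_exponents X \<subseteq> Astar N"
proof
  fix \<alpha> assume \<alpha>: "\<alpha> \<in> basis_exponents X"
  have fin: "finite (basis_exponents X)"
    using finite_basis_exponents[OF assms(1)] .
  then have "card (basis_exponents X) \<in> {1..N}"
    using card_le_if_subset_basis_exponents[OF assms(1) fin] assms(2) \<alpha>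
    by (auto simp: Suc_le_eq card_gt_0_iff)
  moreover have "basis_exponents X \<in> lower_sets_card (card (basis_exponents X))"
    unfolding lower_sets_card_def using lower_set_basis_exponents fin by blast
  ultimately show "\<alpha> \<in> Astar N"
    unfolding Astar_def using \<alpha> by blast
qed

lemma interpolant_if_in_span_monom_on:
  assumes "finite S" "inj_on (monom_on X) S"
    and "(\<lambda>x. if x \<in> X then f x else 0) \<in> fun_space.span (monom_on X ` S)"
  shows "\<exists>p\<in>Pi_span S. \<forall>x\<in>X. peval p x = f x"
proof -
  obtain u where "(\<lambda>x. if x \<in> X then f x else 0) = (\<Sum>v\<in>monom_on X ` S. scale_fun (u v) v)"
    using assms(3) fun_space.span_finite[OF finite_imageI[OF assms(1)]] by blast
  then have f_eq: "(\<lambda>x. if x \<in> X then f x else 0)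
      = (\<Sum>\<beta>\<in>S. scale_fun (u (monom_on X \<beta>)) (monom_on X \<beta>))"
    by (simp add: sum.reindex[OF assms(2)])
  define p where "p \<beta> = (if \<beta> \<in> S then u (monom_on X \<beta>) else 0)" for \<beta>
  have supp_p: "supp p \<subseteq> S" unfolding p_def supp_def by auto
  then have "p \<in> Pi_span S"
    using assms(1) finite_subset unfolding Pi_span_def polys_def by blast
  moreover have "peval p x = f x" if "x \<in> X" for x
  proof -
    have "f x = (\<Sum>\<beta>\<in>S. u (monom_on X \<beta>) * monom \<beta> x)"
      using fun_cong[OF f_eq, of x] that by (simp add: sum_fun_apply scale_fun_def monom_on_def)
    also have "\<dots> = peval p x"
      using peval_eq_sum_monom[OF assms(1) supp_p] by (simp add: p_def)
    finally show ?thesis by simp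
  qed
  ultimately show ?thesis by blast
qed

lemma degree_reducing_interpolant:
  fixes X :: "('n::finite \<Rightarrow> complex) set"
  assumes "finite X" "card X \<le> N" "q \<in> polys"
  shows "\<exists>p\<in>Pi_span (Astar N). (\<forall>x\<in>X. peval p x = peval q x) \<and> tdeg p \<le> tdeg q"
proof -
  have fin_q: "finite (supp q)" using assms(3) unfolding polys_def by simp
  define S where "S = {\<beta> \<in> basis_exponents X. \<exists>\<gamma>\<in>supp q. \<beta> = \<gamma> \<or> grlex_less \<beta> \<gamma>}"
  have S_basis: "S \<subseteq> basis_exponents X" unfolding S_def by blast
  have fin_S: "finite S" using finite_basis_exponents[OF assms(1)] S_basis finite_subset by blast
  have "(\<lambda>x. if x \<in> X then peval q x else 0) = (\<Sum>\<gamma>\<in>supp q. scale_fun (q \<gamma>) (monom_on X \<gamma>))"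
    by (auto simp: fun_eq_iff sum_fun_apply scale_fun_def monom_on_def
        peval_eq_sum_monom[OF fin_q subset_refl])
  also have "\<dots> \<in> fun_space.span (monom_on X ` S)"
  proof (intro fun_space.span_sum fun_space.span_scale)
    fix \<gamma> assume "\<gamma> \<in> supp q"
    then have "monom_on X ` {\<beta> \<in> basis_exponents X. \<beta> = \<gamma> \<or> grlex_less \<beta> \<gamma>} \<subseteq> monom_on X ` S"
      unfolding S_def by blast
    then show "monom_on X \<gamma> \<in> fun_space.span (monom_on X ` S)"
      using monom_on_in_span_basis_exponents fun_space.span_mono by blast
  qed
  finally obtain p where p: "p \<in> Pi_span S" "\<forall>x\<in>X. peval p x = peval q x"
    using interpolant_if_in_span_monom_on[OF fin_S inj_on_subset[OF inj_on_monom_on_basis_exponents S_basis]]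
    by blast
  have "Pi_span S \<subseteq> Pi_span (Astar N)"
    using S_basis basis_exponents_subset_Astar[OF assms(1,2)] unfolding Pi_span_def by blast
  moreover have "tdeg p \<le> tdeg q"
  proof (rule tdeg_le_tdeg)
    show "finite (supp p)" using p(1) unfolding Pi_span_def polys_def by simp
    show "\<forall>\<beta>\<in>supp p. \<exists>\<gamma>\<in>supp q. mdeg \<beta> \<le> mdeg \<gamma>"
      using p(1) unfolding Pi_span_def S_def by (blast dest: grlex_less_imp_mdeg_le)
  qed (rule fin_q)
  ultimately show ?thesis using p by blast
qed

lemma mdr_uis_set_Astar: "mdr_uis_set (Astar N :: ('n::finite \<Rightarrow> nat) set) N"
  unfolding mdr_uis_set_def dr_uis_def
  using degree_reducing_interpolant by (auto simp: Pi_span_def)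

theorem corollary20:
  fixes N :: nat
  assumes "N \<ge> 1"
  shows "mdr_uis_set (Astar N :: ('n::finite \<Rightarrow> nat) set) N
     \<and> (\<forall>A :: ('n \<Rightarrow> nat) set. mdr_uis_set A N \<longrightarrow> Astar N \<subseteq> A)
     \<and> (\<forall>A :: ('n \<Rightarrow> nat) set. A \<subset> Astar N \<longrightarrow> \<not> mdr_uis_set A N)"
  using mdr_uis_set_Astar Astar_subset_mdr_uis_set by blast

end
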